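(* Let $\mathcal{A}$ be a unital C$^*$-algebra with center $Z(\mathcal{A})$. (1) If $L$ is a complete transfer action for a C$^*$-dynamical system $(\mathcal{A},\Gamma^+,\alpha)$, then $(\alpha,L)$ is a complete interaction and $L_x(1)\in Z(\mathcal{A})$ for all $x\in\Gamma^+$. (2) Conversely, if $(\mathcal{V},\mathcal{H})$ is a complete interaction such that $\mathcal{H}_x(1)\in Z(\mathcal{A})$ for all $x\in\Gamma^+$, then each $\mathcal{V}_x$ is multiplicative, i.e. $(\mathcal{A},\Gamma^+,\mathcal{V})$ is a C$^*$-dynamical system, and $\mathcal{H}$ is a complete transfer action for it.
   Context: $\Gamma$ is a totally ordered abelian group with identity $0$ and $\Gamma^+=\{x\in\Gamma:0\le x\}$. An action of $\Gamma^+$ on $\mathcal{A}$ is a map $x\mapsto\mathcal{V}_x$ from $\Gamma^+$ into the bounded positive linear maps $\mathcal{A}\to\mathcal{A}$ with $\mathcal{V}_0=\mathrm{Id}$ and $\mathcal{V}_x\circ\mathcal{V}_y=\mathcal{V}_{x+y}$; a C$^*$-dynamical system $(\mathcal{A},\Gamma^+,\alpha)$ is such an action in which each $\alpha_x$ is a $*$-endomorphism. A transfer action for $(\mathcal{A},\Gamma^+,\alpha)$ is an action $L$ with $L_x(\alpha_x(a)b)=aL_x(b)$ for all $a,b\in\mathcal{A}$, $x\in\Gamma^+$; it is complete if moreover $\alpha_x(L_x(a))=\alpha_x(1)a\alpha_x(1)$ for all $a\in\mathcal{A}$, $x\in\Gamma^+$. An interaction is a pair $(\mathcal{V},\mathcal{H})$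 of actions such that for every $x\in\Gamma^+$: (i) $\mathcal{V}_x\mathcal{H}_x\mathcal{V}_x=\mathcal{V}_x$; (ii) $\mathcal{H}_x\mathcal{V}_x\mathcal{H}_x=\mathcal{H}_x$; (iii) $\mathcal{V}_x(ab)=\mathcal{V}_x(a)\mathcal{V}_x(b)$ whenever $a$ or $b$ belongs to $\mathcal{H}_x(\mathcal{A})$; (iv) $\mathcal{H}_x(ab)=\mathcal{H}_x(a)\mathcal{H}_x(b)$ whenever $a$ or $b$ belongs to $\mathcal{V}_x(\mathcal{A})$. An interaction is complete if moreover $\mathcal{H}_x(\mathcal{V}_x(a))=\mathcal{H}_x(1)a\mathcal{H}_x(1)$ and $\mathcal{V}_x(\mathcal{H}_x(a))=\mathcal{V}_x(1)a\mathcal{V}_x(1)$ for all $x\in\Gamma^+$, $a\in\mathcal{A}$, and $\mathcal{H}_y(1)\mathcal{V}_x(1)=\mathcal{V}_x(1)\mathcal{H}_y(1)$ for all $x,y\in\Gamma^+$. *)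

theory Defs
  imports "HOL-Analysis.Analysis"
begin

text \<open>HOL has no complex vector spaces / C*-algebras, so we axiomatise a unital
C*-algebra as a type class: a real Banach algebra with unit (norm 1 = 1), equipped
with a complex scalar multiplication compatible with the real one and with the norm,
an involution, and the C*-identity.\<close>

class cstar_algebra = real_normed_algebra_1 + banach +
  fixes cstar :: "'a \<Rightarrow> 'a"
    and scaleC :: "complex \<Rightarrow> 'a \<Rightarrow> 'a"
  assumes scaleC_of_real: "scaleC (complex_of_real r) x = scaleR r x"
    and scaleC_add_left: "scaleC (c + d) x = scaleC c x + scaleC d x"
    and scaleC_add_right: "scaleC c (x + y) = scaleC c x + scaleC c y"
    and scaleC_scaleC: "scaleC c (scaleC d x) = scaleC (c * d) x"
    and norm_scaleC: "norm (scaleC c x) = cmod c * norm x"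
    and scaleC_mult_left: "scaleC c x * y = scaleC c (x * y)"
    and scaleC_mult_right: "x * scaleC c y = scaleC c (x * y)"
    and cstar_cstar: "cstar (cstar x) = x"
    and cstar_add: "cstar (x + y) = cstar x + cstar y"
    and cstar_mult: "cstar (x * y) = cstar y * cstar x"
    and cstar_scaleC: "cstar (scaleC c x) = scaleC (cnj c) (cstar x)"
    and cstar_identity: "norm (cstar x * x) = (norm x)\<^sup>2"

definition center :: "'a::cstar_algebra set" where
  "center = {z. \<forall>a. z * a = a * z}"

definition positive_elem :: "'a::cstar_algebra \<Rightarrow> bool" where
  "positive_elem a \<longleftrightarrow> (\<exists>b. a = cstar b * b)"

definition clinear_map :: "('a::cstar_algebra \<Rightarrow> 'a) \<Rightarrow> bool" where
  "clinear_map T \<longleftrightarrow> (\<forall>a b. T (a + b) = T a + T b) \<and> (\<forall>c a. T (scaleC c a) = scaleC c (T a))"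

definition bounded_map :: "('a::cstar_algebra \<Rightarrow> 'a) \<Rightarrow> bool" where
  "bounded_map T \<longleftrightarrow> (\<exists>K. \<forall>a. norm (T a) \<le> norm a * K)"

definition positive_map :: "('a::cstar_algebra \<Rightarrow> 'a) \<Rightarrow> bool" where
  "positive_map T \<longleftrightarrow> (\<forall>a. positive_elem a \<longrightarrow> positive_elem (T a))"

definition bpl_map :: "('a::cstar_algebra \<Rightarrow> 'a) \<Rightarrow> bool" where
  "bpl_map T \<longleftrightarrow> clinear_map T \<and> bounded_map T \<and> positive_map T"

definition star_endo :: "('a::cstar_algebra \<Rightarrow> 'a) \<Rightarrow> bool" where
  "star_endo T \<longleftrightarrow> clinear_map T \<and> (\<forall>a b. T (a * b) = T a * T b) \<and> (\<forall>a. T (cstar a) = cstar (T a))"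

text \<open>Gamma is a type of class linordered_ab_group_add; Gamma^+ = {x. 0 \<le> x}.
An action is a map defined on all of Gamma, only its values on Gamma^+ matter.\<close>

definition action :: "('g::linordered_ab_group_add \<Rightarrow> 'a::cstar_algebra \<Rightarrow> 'a) \<Rightarrow> bool" where
  "action V \<longleftrightarrow> (\<forall>x. 0 \<le> x \<longrightarrow> bpl_map (V x)) \<and> V 0 = id \<and>
     (\<forall>x y. 0 \<le> x \<longrightarrow> 0 \<le> y \<longrightarrow> V x \<circ> V y = V (x + y))"

definition cstar_dyn_sys :: "('g::linordered_ab_group_add \<Rightarrow> 'a::cstar_algebra \<Rightarrow> 'a) \<Rightarrow> bool" where
  "cstar_dyn_sys \<alpha> \<longleftrightarrow> action \<alpha> \<and> (\<forall>x. 0 \<le> x \<longrightarrow> star_endo (\<alpha> x))"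

definition transfer_action ::
  "('g::linordered_ab_group_add \<Rightarrow> 'a::cstar_algebra \<Rightarrow> 'a) \<Rightarrow> ('g \<Rightarrow> 'a \<Rightarrow> 'a) \<Rightarrow> bool" where
  "transfer_action \<alpha> L \<longleftrightarrow> action L \<and>
     (\<forall>x a b. 0 \<le> x \<longrightarrow> L x (\<alpha> x a * b) = a * L x b)"

definition complete_transfer_action ::
  "('g::linordered_ab_group_add \<Rightarrow> 'a::cstar_algebra \<Rightarrow> 'a) \<Rightarrow> ('g \<Rightarrow> 'a \<Rightarrow> 'a) \<Rightarrow> bool" where
  "complete_transfer_action \<alpha> L \<longleftrightarrow> transfer_action \<alpha> L \<and>
     (\<forall>x a. 0 \<le> x \<longrightarrow> \<alpha> x (L x a) = \<alpha> x 1 * a * \<alpha> x 1)"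

definition interaction ::
  "('g::linordered_ab_group_add \<Rightarrow> 'a::cstar_algebra \<Rightarrow> 'a) \<Rightarrow> ('g \<Rightarrow> 'a \<Rightarrow> 'a) \<Rightarrow> bool" where
  "interaction V H \<longleftrightarrow> action V \<and> action H \<and>
     (\<forall>x. 0 \<le> x \<longrightarrow>
        V x \<circ> H x \<circ> V x = V x \<and>
        H x \<circ> V x \<circ> H x = H x \<and>
        (\<forall>a b. (a \<in> range (H x) \<or> b \<in> range (H x)) \<longrightarrow> V x (a * b) = V x a * V x b) \<and>
        (\<forall>a b. (a \<in> range (V x) \<or> b \<in> range (V x)) \<longrightarrow> H x (a * b) = H x a * H x b))"

definition complete_interaction ::
  "('g::linordered_ab_group_add \<Rightarrow> 'a::cstar_algebra \<Rightarrow> 'a) \<Rightarrow> ('g \<Rightarrow> 'a \<Rightarrow> 'a) \<Rightarrow> bool" where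
  "complete_interaction V H \<longleftrightarrow> interaction V H \<and>
     (\<forall>x a. 0 \<le> x \<longrightarrow> H x (V x a) = H x 1 * a * H x 1 \<and> V x (H x a) = V x 1 * a * V x 1) \<and>
     (\<forall>x y. 0 \<le> x \<longrightarrow> 0 \<le> y \<longrightarrow> H y 1 * V x 1 = V x 1 * H y 1)"

end

theory Submission
  imports Defs "HOL-Computational_Algebra.Formal_Power_Series"
begin

text \<open>Positive linear maps of a unital C*-algebra preserve adjoints: every self-adjoint element
is a difference of elements of the form \<open>cstar b * b\<close>, because for self-adjoint \<open>h\<close> with
\<open>norm h < 1\<close> the binomial series of \<open>(1 + h) powr (1/2)\<close> converges to a self-adjoint square root
of \<open>1 + h\<close>.

For (1), taking adjoints in the transfer identity gives \<open>L\<^sub>x (b * \<alpha>\<^sub>x c) = L\<^sub>x b * c\<close>; with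
\<open>b = 1\<close> this shows that \<open>L\<^sub>x 1\<close> is central, and since \<open>\<alpha>\<^sub>x (L\<^sub>x 1) = \<alpha>\<^sub>x 1\<close> also
\<open>L\<^sub>x 1 * L\<^sub>x a = L\<^sub>x a\<close>, from which the interaction identities follow.
For (2), \<open>q = H\<^sub>x 1 * H\<^sub>x 1\<close> is a central idempotent with \<open>H\<^sub>x (V\<^sub>x a) = q * a\<close> and
\<open>q * H\<^sub>x a = H\<^sub>x a\<close>; hence \<open>V\<^sub>x (a * b) = V\<^sub>x (q * a * (q * b))\<close>, which splits because
\<open>q * a\<close> lies in the range of \<open>H\<^sub>x\<close>.\<close>

lemma scaleC_one: "scaleC 1 (x::'a::cstar_algebra) = x"
  using scaleC_of_real[of 1 x] by simp

lemma scaleC_minus_one: "scaleC (-1) (x::'a::cstar_algebra) = - x"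
  using scaleC_of_real[of "-1" x] by simp

lemma scaleC_minus_left: "scaleC (- c) x = - scaleC c (x::'a::cstar_algebra)"
  using scaleC_scaleC[of "-1" c x] scaleC_minus_one[of "scaleC c x"] by simp

lemma scaleC_diff_right: "scaleC c (x - y) = scaleC c x - scaleC c (y::'a::cstar_algebra)"
  using scaleC_add_right[of c "x - y" y] by (simp add: eq_diff_eq)

lemma cstar_scaleR: "cstar (scaleR r (x::'a::cstar_algebra)) = scaleR r (cstar x)"
  by (metis scaleC_of_real cstar_scaleC complex_cnj_complex_of_real)

lemma norm_cstar: "norm (cstar (x::'a::cstar_algebra)) = norm x"
proof -
  have le: "norm y \<le> norm (cstar y)" for y :: 'a
  proof (cases "y = 0")
    case False
    have "norm y * norm y \<le> norm (cstar y) * norm y"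
      using cstar_identity[of y] norm_mult_ineq[of "cstar y" y] by (simp add: power2_eq_square)
    with False show ?thesis by simp
  qed simp
  show ?thesis
    using le[of x] le[of "cstar x"] by (simp add: cstar_cstar)
qed

lemma bounded_linear_cstar: "bounded_linear (cstar :: 'a::cstar_algebra \<Rightarrow> 'a)"
  by (rule bounded_linear_intro[where K=1]) (simp_all add: cstar_add cstar_scaleR norm_cstar)

lemma cstar_one: "cstar (1::'a::cstar_algebra) = 1"
  by (metis cstar_cstar cstar_mult mult_1_left mult_1_right)

lemma cstar_diff: "cstar (x - y) = cstar x - cstar (y::'a::cstar_algebra)"
  using linear_diff[OF bounded_linear.linear[OF bounded_linear_cstar]] .

lemma cstar_power: "cstar h = h \<Longrightarrow> cstar (h ^ n) = (h::'a::cstar_algebra) ^ n"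
  by (induction n) (simp_all add: cstar_one cstar_mult power_commutes)

lemma positive_elem_cstar: "positive_elem p \<Longrightarrow> cstar p = p"
  unfolding positive_elem_def by (auto simp: cstar_mult cstar_cstar)

lemma center_commute: "z \<in> center \<Longrightarrow> z * a = a * z"
  unfolding center_def by blast

lemma center_mult:
  assumes "z \<in> center" "w \<in> center"
  shows "z * w \<in> center"
proof -
  have "z * w * a = a * (z * w)" for a
  proof -
    have "z * w * a = z * (a * w)"
      using center_commute[OF assms(2), of a] by (simp add: mult.assoc)
    also have "\<dots> = a * (z * w)"
      using center_commute[OF assms(1), of a] by (simp add: mult.assoc [symmetric])
    finally show ?thesis .
  qed
  thus ?thesis
    unfolding center_def by simp
qed

lemma abs_gbinomial_le_1:
  fixes a :: real
  assumes "0 \<le> a" "a \<le> 1"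
  shows "\<bar>a gchoose n\<bar> \<le> 1"
proof (induction n)
  case (Suc k)
  have "real (Suc k) * (a gchoose Suc k) = (a - real k) * (a gchoose k)"
    unfolding gbinomial_absorption gbinomial_absorb_comp ..
  hence "real (Suc k) * \<bar>a gchoose Suc k\<bar> = \<bar>a - real k\<bar> * \<bar>a gchoose k\<bar>"
    by (metis abs_mult abs_of_nat)
  also have "\<dots> \<le> real (Suc k) * 1"
    using assms Suc.IH by (intro mult_mono) auto
  finally show ?case
    by (simp del: of_nat_Suc)
qed simp

definition binomial_sqrt :: "'a::{real_normed_algebra_1,banach} \<Rightarrow> 'a" where
  "binomial_sqrt h = (\<Sum>n. ((1/2::real) gchoose n) *\<^sub>R h ^ n)"

lemma summable_norm_binomial_sqrt:
  fixes h :: "'a::{real_normed_algebra_1,banach}"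
  assumes "norm h < 1"
  shows "summable (\<lambda>n. norm (((1/2::real) gchoose n) *\<^sub>R h ^ n))"
proof (rule summable_comparison_test[OF _ summable_geometric])
  have "\<bar>(1/2::real) gchoose n\<bar> * norm (h ^ n) \<le> 1 * norm h ^ n" for n
    using abs_gbinomial_le_1[of "1/2" n] norm_power_ineq[of h n] by (intro mult_mono) auto
  thus "\<exists>N. \<forall>n\<ge>N. norm (norm (((1/2::real) gchoose n) *\<^sub>R h ^ n)) \<le> norm h ^ n"
    by auto
qed (use assms in auto)

lemma binomial_sqrt_squared:
  fixes h :: "'a::{real_normed_algebra_1,banach}"
  assumes "norm h < 1"
  shows "binomial_sqrt h * binomial_sqrt h = 1 + h"
proof -
  define f where "f n = ((1/2::real) gchoose n) *\<^sub>R h ^ n" for n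
  have Cauchy_coeff: "(\<Sum>i\<le>k. f i * f (k - i)) = ((1::real) gchoose k) *\<^sub>R h ^ k" for k
  proof -
    have "(\<Sum>i\<le>k. f i * f (k - i)) = (\<Sum>i\<le>k. ((1/2::real) gchoose i) * ((1/2) gchoose (k - i))) *\<^sub>R h ^ k"
      by (simp add: f_def scaleR_sum_left power_add [symmetric] mult.commute)
    also have "(\<Sum>i\<le>k. ((1/2::real) gchoose i) * ((1/2) gchoose (k - i))) = (1::real) gchoose k"
      using gbinomial_Vandermonde[of "1/2::real" "1/2" k] by (simp add: atLeast0AtMost)
    finally show ?thesis .
  qed
  have "(\<lambda>k. ((1::real) gchoose k) *\<^sub>R h ^ k) sums (binomial_sqrt h * binomial_sqrt h)"
    using Cauchy_product_sums[OF summable_norm_binomial_sqrt summable_norm_binomial_sqrt, OF assms assms]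
    by (simp add: binomial_sqrt_def f_def [symmetric] Cauchy_coeff)
  moreover have "(\<lambda>k. ((1::real) gchoose k) *\<^sub>R h ^ k) sums (1 + h)"
  proof -
    have "((1::real) gchoose k) = of_nat (1 choose k)" for k
      using binomial_gbinomial[of 1 k, where 'a=real] by simp
    hence "(1::real) gchoose k = 0" if "k \<notin> {0, 1}" for k
      using that by (simp add: binomial_eq_0)
    hence "(\<lambda>k. ((1::real) gchoose k) *\<^sub>R h ^ k) sums (\<Sum>k\<in>{0, 1}. ((1::real) gchoose k) *\<^sub>R h ^ k)"
      by (intro sums_finite) auto
    thus ?thesis by simp
  qed
  ultimately show ?thesis by (rule sums_unique2)
qed

lemma cstar_binomial_sqrt:
  fixes h :: "'a::cstar_algebra"
  assumes "cstar h = h" "norm h < 1"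
  shows "cstar (binomial_sqrt h) = binomial_sqrt h"
proof -
  have "summable (\<lambda>n. ((1/2::real) gchoose n) *\<^sub>R h ^ n)"
    by (rule summable_norm_cancel[OF summable_norm_binomial_sqrt[OF assms(2)]])
  from bounded_linear.suminf[OF bounded_linear_cstar this] show ?thesis
    by (simp add: binomial_sqrt_def cstar_scaleR cstar_power[OF assms(1)])
qed

lemma selfadjoint_eq_diff_positive:
  fixes h :: "'a::cstar_algebra"
  assumes "cstar h = h"
  obtains P Q where "positive_elem P" "positive_elem Q" "h = P - Q"
proof -
  define r where "r = norm h + 1"
  have r: "r > 0" unfolding r_def by (simp add: add_nonneg_pos)
  define s where "s = binomial_sqrt ((1 / r) *\<^sub>R h)"
  have small: "norm ((1 / r) *\<^sub>R h) < 1"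
    using r unfolding r_def by (simp add: field_simps)
  have "cstar (sqrt r *\<^sub>R s) * (sqrt r *\<^sub>R s) = r *\<^sub>R (s * s)"
    using r cstar_binomial_sqrt[OF _ small] assms by (simp add: s_def cstar_scaleR)
  also have "\<dots> = r *\<^sub>R 1 + h"
    using r by (simp add: s_def binomial_sqrt_squared[OF small] scaleR_add_right)
  finally have P: "positive_elem (r *\<^sub>R 1 + h)"
    unfolding positive_elem_def by metis
  have "cstar (sqrt r *\<^sub>R (1::'a)) * (sqrt r *\<^sub>R 1) = r *\<^sub>R 1"
    using r by (simp add: cstar_scaleR cstar_one)
  hence Q: "positive_elem (r *\<^sub>R (1::'a))"
    unfolding positive_elem_def by metis
  show thesis
    using that[OF P Q] by simp
qed

lemma clinear_map_diff:
  assumes "clinear_map T"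
  shows "T (x - y) = T x - T y"
proof -
  have "T (x - y + y) = T (x - y) + T y"
    using assms unfolding clinear_map_def by blast
  thus ?thesis
    by (simp add: eq_diff_eq)
qed

lemma positive_map_selfadjoint:
  fixes T :: "'a::cstar_algebra \<Rightarrow> 'a"
  assumes "clinear_map T" "positive_map T" "cstar h = h"
  shows "cstar (T h) = T h"
proof -
  obtain P Q where PQ: "positive_elem P" "positive_elem Q" "h = P - Q"
    using selfadjoint_eq_diff_positive[OF assms(3)] by blast
  have "T h = T P - T Q"
    unfolding PQ(3) using assms(1) by (rule clinear_map_diff)
  moreover have "positive_elem (T P)" "positive_elem (T Q)"
    using assms(2) PQ unfolding positive_map_def by auto
  ultimately show ?thesis
    by (simp add: cstar_diff positive_elem_cstar)
qed

lemma clinear_map_cstar_commute: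
  fixes T :: "'a::cstar_algebra \<Rightarrow> 'a"
  assumes lin: "clinear_map T"
    and selfadjoint: "\<And>h. cstar h = h \<Longrightarrow> cstar (T h) = T h"
  shows "T (cstar a) = cstar (T a)"
proof -
  have add: "T (x + y) = T x + T y" and scale: "T (scaleC c x) = scaleC c (T x)" for x y c
    using lin unfolding clinear_map_def by blast+
  have diff: "T (x - y) = T x - T y" for x y
    using lin by (rule clinear_map_diff)
  define X Y Z W where "X = cstar (T a)" "Y = cstar (T (cstar a))" "Z = T (cstar a)" "W = T a"
  have "cstar (a + cstar a) = a + cstar a"
    by (simp add: cstar_add cstar_cstar add.commute)
  from selfadjoint[OF this] have real_part: "X + Y = W + Z"
    by (simp add: X_Y_Z_W_def add cstar_add)
  have "cstar (scaleC \<i> (a - cstar a)) = scaleC \<i> (a - cstar a)"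
    by (simp add: cstar_scaleC cstar_diff cstar_cstar scaleC_minus_left scaleC_diff_right)
  from selfadjoint[OF this] have "scaleC (- \<i>) (X - Y) = scaleC \<i> (W - Z)"
    by (simp add: X_Y_Z_W_def scale diff cstar_scaleC cstar_diff)
  hence "scaleC \<i> (scaleC (- \<i>) (X - Y)) = scaleC \<i> (scaleC \<i> (W - Z))"
    by simp
  hence imaginary_part: "X - Y = Z - W"
    by (simp add: scaleC_scaleC scaleC_one scaleC_minus_one)
  have "2 *\<^sub>R X = (X + Y) + (X - Y)"
    by (simp add: scaleR_2)
  also have "\<dots> = 2 *\<^sub>R Z"
    by (simp add: real_part imaginary_part scaleR_2)
  finally show ?thesis
    by (simp add: X_Y_Z_W_def)
qed

lemma action_cstar:
  assumes "action V" "0 \<le> x"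
  shows "V x (cstar a) = cstar (V x a)"
proof -
  have "bpl_map (V x)"
    using assms unfolding action_def by blast
  thus ?thesis
    unfolding bpl_map_def
    by (blast intro: clinear_map_cstar_commute positive_map_selfadjoint)
qed

locale complete_transfer_operator =
  fixes \<alpha> L :: "'a::cstar_algebra \<Rightarrow> 'a"
  assumes mult: "\<alpha> (a * b) = \<alpha> a * \<alpha> b"
    and cstar_alpha: "\<alpha> (cstar a) = cstar (\<alpha> a)"
    and cstar_L: "L (cstar a) = cstar (L a)"
    and transfer: "L (\<alpha> a * b) = a * L b"
    and complete: "\<alpha> (L a) = \<alpha> 1 * a * \<alpha> 1"
begin

lemma transfer_right: "L (b * \<alpha> c) = L b * c"
proof -
  have "cstar (L (b * \<alpha> c)) = L (cstar (b * \<alpha> c))"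
    by (rule cstar_L [symmetric])
  also have "\<dots> = L (\<alpha> (cstar c) * cstar b)"
    by (simp add: cstar_mult cstar_alpha)
  also have "\<dots> = cstar (L b * c)"
    by (simp add: transfer cstar_L cstar_mult)
  finally show ?thesis
    by (metis cstar_cstar)
qed

lemma L_alpha: "L (\<alpha> a) = a * L 1"
  using transfer[of a 1] by simp

lemma L_one_central: "L 1 \<in> center"
  unfolding center_def using transfer_right[of 1] L_alpha by simp

lemma L_one_mult: "L 1 * L a = L a"
proof -
  have "\<alpha> (L 1) = \<alpha> 1"
    using complete[of 1] mult[of 1 1] by simp
  hence "L (\<alpha> (L 1) * a) = L (\<alpha> 1 * a)"
    by simp
  thus ?thesis
    by (simp add: transfer)
qed

lemma mult_L_one: "L a * L 1 = L a"
  using L_one_mult[of a] center_commute[OF L_one_central, of "L a"] by simp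

lemma alpha_L_alpha: "\<alpha> (L (\<alpha> a)) = \<alpha> a"
  by (simp add: complete mult [symmetric])

lemma L_alpha_L: "L (\<alpha> (L a)) = L a"
  by (simp add: L_alpha mult_L_one)

lemma L_mult_alpha_left: "L (\<alpha> c * b) = L (\<alpha> c) * L b"
  by (simp add: transfer L_alpha mult.assoc L_one_mult)

lemma L_mult_alpha_right: "L (a * \<alpha> c) = L a * L (\<alpha> c)"
proof -
  have "L a * L (\<alpha> c) = L a * (L 1 * c)"
    using center_commute[OF L_one_central, of c] by (simp add: L_alpha)
  also have "\<dots> = L a * c"
    by (simp add: mult.assoc [symmetric] mult_L_one)
  finally show ?thesis
    by (simp add: transfer_right)
qed

lemma L_alpha_eq: "L (\<alpha> a) = L 1 * a * L 1"
  using center_commute[OF L_one_central, of a] L_one_mult[of 1]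
  by (simp add: L_alpha mult.assoc)

end

lemma complete_interaction_if_complete_transfer_action:
  fixes \<alpha> L :: "'g::linordered_ab_group_add \<Rightarrow> 'a::cstar_algebra \<Rightarrow> 'a"
  assumes "cstar_dyn_sys \<alpha>" "complete_transfer_action \<alpha> L"
  shows "complete_interaction \<alpha> L" "\<forall>x. 0 \<le> x \<longrightarrow> L x 1 \<in> center"
proof -
  have actions: "action \<alpha>" "action L"
    using assms unfolding cstar_dyn_sys_def complete_transfer_action_def transfer_action_def
    by auto
  have operator: "complete_transfer_operator (\<alpha> x) (L x)" if "0 \<le> x" for x
  proof
    show "\<alpha> x (a * b) = \<alpha> x a * \<alpha> x b" "\<alpha> x (cstar a) = cstar (\<alpha> x a)" for a b
      using assms(1) that unfolding cstar_dyn_sys_def star_endo_def by auto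
    show "L x (cstar a) = cstar (L x a)" for a
      using actions(2) that by (rule action_cstar)
    show "L x (\<alpha> x a * b) = a * L x b" "\<alpha> x (L x a) = \<alpha> x 1 * a * \<alpha> x 1" for a b
      using assms(2) that unfolding complete_transfer_action_def transfer_action_def by auto
  qed
  show "complete_interaction \<alpha> L"
    unfolding complete_interaction_def interaction_def
  proof (intro conjI allI impI actions ext)
    fix x y :: 'g and a b :: 'a
    assume x: "0 \<le> x"
    interpret complete_transfer_operator "\<alpha> x" "L x"
      using operator[OF x] .
    show "(\<alpha> x \<circ> L x \<circ> \<alpha> x) a = \<alpha> x a" "(L x \<circ> \<alpha> x \<circ> L x) a = L x a"
      by (simp_all add: alpha_L_alpha L_alpha_L)
    show "\<alpha> x (a * b) = \<alpha> x a * \<alpha> x b"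
      by (rule mult)
    show "L x (a * b) = L x a * L x b" if "a \<in> range (\<alpha> x) \<or> b \<in> range (\<alpha> x)"
      using that L_mult_alpha_left L_mult_alpha_right by auto
    show "L x (\<alpha> x a) = L x 1 * a * L x 1" "\<alpha> x (L x a) = \<alpha> x 1 * a * \<alpha> x 1"
      by (simp_all add: L_alpha_eq complete)
    show "L y 1 * \<alpha> x 1 = \<alpha> x 1 * L y 1" if "0 \<le> y"
      using complete_transfer_operator.L_one_central[OF operator[OF that]]
      by (rule center_commute)
  qed
  show "\<forall>x. 0 \<le> x \<longrightarrow> L x 1 \<in> center"
    using complete_transfer_operator.L_one_central[OF operator] by blast
qed

lemma center_mult_factor_out:
  assumes "z \<in> center"
  shows "z * a * (z * b) = z * z * (a * b)"
proof -
  have "a * (z * b) = z * (a * b)"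
    using center_commute[OF assms, of a] by (metis mult.assoc)
  thus ?thesis
    by (simp add: mult.assoc)
qed

locale central_interaction_operator =
  fixes V H :: "'a::cstar_algebra \<Rightarrow> 'a"
  assumes V_H_V: "V (H (V a)) = V a"
    and H_V_H: "H (V (H a)) = H a"
    and V_mult_H: "V (H a * b) = V (H a) * V b"
    and H_mult_V: "H (V a * b) = H (V a) * H b"
    and H_V: "H (V a) = H 1 * a * H 1"
    and H_one_central: "H 1 \<in> center"
begin

lemma H_one_sq_central: "H 1 * H 1 \<in> center"
  using H_one_central H_one_central by (rule center_mult)

lemma H_V_eq: "H (V a) = H 1 * H 1 * a"
proof -
  have "H (V a) = H 1 * (a * H 1)"
    by (simp add: H_V mult.assoc)
  also have "a * H 1 = H 1 * a"
    by (rule center_commute [OF H_one_central, symmetric])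
  finally show ?thesis
    by (simp add: mult.assoc)
qed

lemma H_one_sq_mult_H: "H 1 * H 1 * H a = H a"
  using H_V_H[of a] H_V_eq[of "H a"] by simp

lemma H_one_sq_idem: "H 1 * H 1 * (H 1 * H 1) = H 1 * H 1"
  using H_one_sq_mult_H[of 1] by (simp add: mult.assoc)

lemma V_H_one_sq_mult: "V (H 1 * H 1 * a) = V a"
  using V_H_V[of a] H_V_eq[of a] by simp

lemma V_mult: "V (a * b) = V a * V b"
proof -
  have "V (a * b) = V (H 1 * H 1 * a * (H 1 * H 1 * b))"
    by (simp add: center_mult_factor_out[OF H_one_sq_central] H_one_sq_idem V_H_one_sq_mult)
  also have "\<dots> = V (H 1 * H 1 * a) * V (H 1 * H 1 * b)"
    using V_mult_H[of "V a" "H 1 * H 1 * b"] by (simp add: H_V_eq)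
  finally show ?thesis
    by (simp add: V_H_one_sq_mult)
qed

lemma H_transfer: "H (V a * b) = a * H b"
proof -
  have "H (V a * b) = H 1 * H 1 * a * H b"
    by (simp add: H_mult_V H_V_eq)
  also have "\<dots> = a * (H 1 * H 1 * H b)"
    using center_commute[OF H_one_sq_central, of a] by (metis mult.assoc)
  finally show ?thesis
    by (simp add: H_one_sq_mult_H)
qed

end

lemma complete_interaction_actions:
  assumes "complete_interaction V H"
  shows "action V" "action H"
  using assms unfolding complete_interaction_def interaction_def by auto

lemma complete_interactionD:
  fixes V H :: "'g::linordered_ab_group_add \<Rightarrow> 'a::cstar_algebra \<Rightarrow> 'a"
  assumes "complete_interaction V H" "0 \<le> x"
  shows "V x (H x (V x a)) = V x a" "H x (V x (H x a)) = H x a"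
    and "V x (H x a * b) = V x (H x a) * V x b" "H x (V x a * b) = H x (V x a) * H x b"
    and "H x (V x a) = H x 1 * a * H x 1" "V x (H x a) = V x 1 * a * V x 1"
  using assms unfolding complete_interaction_def interaction_def
  by (auto simp: fun_eq_iff)

lemma complete_transfer_action_if_complete_interaction:
  fixes V H :: "'g::linordered_ab_group_add \<Rightarrow> 'a::cstar_algebra \<Rightarrow> 'a"
  assumes ci: "complete_interaction V H" and central: "\<forall>x. 0 \<le> x \<longrightarrow> H x 1 \<in> center"
  shows "\<forall>x. 0 \<le> x \<longrightarrow> (\<forall>a b. V x (a * b) = V x a * V x b)"
    and "cstar_dyn_sys V" "complete_transfer_action V H"
proof -
  have operator: "central_interaction_operator (V x) (H x)" if x: "0 \<le> x" for x
    using complete_interactionD[OF ci x] central x by unfold_locales blast+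
  show mult: "\<forall>x. 0 \<le> x \<longrightarrow> (\<forall>a b. V x (a * b) = V x a * V x b)"
    using central_interaction_operator.V_mult[OF operator] by blast
  show "cstar_dyn_sys V"
    unfolding cstar_dyn_sys_def star_endo_def
  proof (intro conjI allI impI complete_interaction_actions(1)[OF ci])
    fix x :: 'g
    assume x: "0 \<le> x"
    show "clinear_map (V x)"
      using complete_interaction_actions(1)[OF ci] x unfolding action_def bpl_map_def by blast
    show "V x (a * b) = V x a * V x b" for a b
      using mult x by blast
    show "V x (cstar a) = cstar (V x a)" for a
      using complete_interaction_actions(1)[OF ci] x by (rule action_cstar)
  qed
  show "complete_transfer_action V H"
    unfolding complete_transfer_action_def transfer_action_def
  proof (intro conjI allI impI complete_interaction_actions(2)[OF ci])
    fix x :: 'g and a b :: 'a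
    assume x: "0 \<le> x"
    show "H x (V x a * b) = a * H x b"
      using operator[OF x] by (rule central_interaction_operator.H_transfer)
    show "V x (H x a) = V x 1 * a * V x 1"
      by (rule complete_interactionD(6)[OF ci x])
  qed
qed

theorem proposition3p4:
  shows "(\<forall>(\<alpha>::'g::linordered_ab_group_add \<Rightarrow> 'a::cstar_algebra \<Rightarrow> 'a) L.
            cstar_dyn_sys \<alpha> \<and> complete_transfer_action \<alpha> L \<longrightarrow>
              complete_interaction \<alpha> L \<and> (\<forall>x. 0 \<le> x \<longrightarrow> L x 1 \<in> center))
       \<and> (\<forall>(V::'g \<Rightarrow> 'a \<Rightarrow> 'a) H.
            complete_interaction V H \<and> (\<forall>x. 0 \<le> x \<longrightarrow> H x 1 \<in> center) \<longrightarrow>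
              (\<forall>x. 0 \<le> x \<longrightarrow> (\<forall>a b. V x (a * b) = V x a * V x b)) \<and>
              cstar_dyn_sys V \<and> complete_transfer_action V H)"
proof (rule conjI; intro allI impI; elim conjE)
  fix \<alpha> L :: "'g \<Rightarrow> 'a \<Rightarrow> 'a"
  assume "cstar_dyn_sys \<alpha>" "complete_transfer_action \<alpha> L"
  from complete_interaction_if_complete_transfer_action[OF this]
  show "complete_interaction \<alpha> L \<and> (\<forall>x. 0 \<le> x \<longrightarrow> L x 1 \<in> center)" ..
next
  fix V H :: "'g \<Rightarrow> 'a \<Rightarrow> 'a"
  assume "complete_interaction V H" "\<forall>x. 0 \<le> x \<longrightarrow> H x 1 \<in> center"
  from complete_transfer_action_if_complete_interaction[OF this]
  show "(\<forall>x. 0 \<le> x \<longrightarrow> (\<forall>a b. V x (a * b) = V x a * V x b)) \<and>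
      cstar_dyn_sys V \<and> complete_transfer_action V H"
    by blast
qed
end
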